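(* $m_5(6)\geq 20$. Specifically, the $6$-uniform family $\mathcal T_0\circ\binom{[3]}{2}$ (with $300$ edges) is intersecting, has covering number $6$, and satisfies $\gamma_5\big(\mathcal T_0\circ\binom{[3]}{2}\big)\geq 20$.
   Context: $\mathcal T_0\subset\binom{[6]}{3}$ is $\{\{1,2,3\},\{1,2,4\},\{3,4,5\},\{3,4,6\},\{1,5,6\},\{2,5,6\},\{1,3,5\},\{2,4,5\},\{1,4,6\},\{2,3,6\}\}$. Wreath product: for $\mathcal A\subset 2^X$, $\mathcal B\subset 2^{[n]}$, take disjoint copies $X_1,\dots,X_n$ of $X$ with copies $\mathcal A_i$ of $\mathcal A$; for $B=\{i_1,\dots,i_r\}\in\mathcal B$ let $\mathcal A^B=\{A_{i_1}\cup\dots\cup A_{i_r}:A_{i_s}\in\mathcal A_{i_s}\}$, and $\mathcal A\circ\mathcal B=\bigcup_{B\in\mathcal B}\mathcal A^B$. For a family $\mathcal F$ on ground set $Z$, $\gamma_j(\mathcal F)=\min_{S\subset Z,|S|=j}|\{F\in\mathcal F:F\cap S=\emptyset\}|$; $\tau$ is the minimum size of a set meeting all members. $m_j(k)$ is the maximum of $\gamma_j(\mathcal F)$ over all intersecting $k$-uniform families $\mathcal F$ with $\tau(\mathcal F)=k$. *)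

theory Defs
  imports Main "HOL-Library.Extended_Nat"
begin

definition T0 :: "nat set set" where
  "T0 = {{1,2,3},{1,2,4},{3,4,5},{3,4,6},{1,5,6},{2,5,6},{1,3,5},{2,4,5},{1,4,6},{2,3,6}}"

definition ksubsets :: "'a set \<Rightarrow> nat \<Rightarrow> 'a set set" where
  "ksubsets S k = {B. B \<subseteq> S \<and> card B = k}"

text \<open>Wreath product: the i-th copy of the ground set X is X \<times> {i}.\<close>
definition wreath :: "'a set set \<Rightarrow> nat set set \<Rightarrow> ('a \<times> nat) set set" where
  "wreath \<A> \<B> = (\<Union>B\<in>\<B>. {(\<Union>i\<in>B. (\<lambda>x. (x, i)) ` g i) | g. \<forall>i\<in>B. g i \<in> \<A>})"

definition intersecting :: "'a set set \<Rightarrow> bool" where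
  "intersecting \<F> \<longleftrightarrow> (\<forall>A\<in>\<F>. \<forall>B\<in>\<F>. A \<inter> B \<noteq> {})"

definition uniform :: "nat \<Rightarrow> 'a set set \<Rightarrow> bool" where
  "uniform k \<F> \<longleftrightarrow> (\<forall>F\<in>\<F>. finite F \<and> card F = k)"

definition tau :: "'a set set \<Rightarrow> nat" where
  "tau \<F> = Inf {card T | T. finite T \<and> (\<forall>F\<in>\<F>. T \<inter> F \<noteq> {})}"

definition gamma :: "nat \<Rightarrow> 'a set \<Rightarrow> 'a set set \<Rightarrow> nat" where
  "gamma j Z \<F> = Inf {card {F\<in>\<F>. F \<inter> S = {}} | S. S \<subseteq> Z \<and> card S = j}"

text \<open>m_j(k): maximum (supremum in enat) of gamma_j over intersecting k-uniform families
  with covering number k (ground set taken to be the union of the family; any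
  finite family can be relabelled into nat).\<close>
definition m :: "nat \<Rightarrow> nat \<Rightarrow> enat" where
  "m j k = Sup {enat (gamma j (\<Union>\<F>) \<F>) | \<F> :: nat set set.
                 uniform k \<F> \<and> intersecting \<F> \<and> tau \<F> = k}"

end

theory Submission
  imports Defs "HOL-Library.FuncSet" "HOL-Library.Nat_Bijection"
begin

text \<open>A member of \<open>T\<^sub>0 \<circ> ([3] choose 2)\<close> is a member of \<open>T\<^sub>0\<close> in each of two of the three copies
  of \<open>[6]\<close>, so the members missing a set \<open>S\<close> number \<open>a\<^sub>1a\<^sub>2 + a\<^sub>1a\<^sub>3 + a\<^sub>2a\<^sub>3\<close>, where \<open>a\<^sub>i\<close>
  counts the members of \<open>T\<^sub>0\<close> missing the trace of \<open>S\<close> on the \<open>i\<close>-th copy. In \<open>T\<^sub>0\<close> every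
  point is missed by 5 of the 10 members and every pair by 2, so for \<open>|S| = 5\<close> each split
  \<open>s\<^sub>1 + s\<^sub>2 + s\<^sub>3 = 5\<close> of the traces leaves at least 20 members, the minimum coming from
  \<open>(3, 2, 0)\<close>. In particular no 5-set is a transversal, while \<open>{1,2,3} \<times> {1,2}\<close> is one, so
  \<open>\<tau> = 6\<close>; intersection follows since any two pairs in \<open>[3]\<close> share a copy and \<open>T\<^sub>0\<close> is
  intersecting.\<close>

abbreviation transversal :: "'a set \<Rightarrow> 'a set set \<Rightarrow> bool" where
  "transversal T \<F> \<equiv> \<forall>F\<in>\<F>. T \<inter> F \<noteq> {}"

definition slice :: "'i \<Rightarrow> ('a \<times> 'i) set \<Rightarrow> 'a set" where
  "slice i F = {x. (x, i) \<in> F}"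

text \<open>The paper's \<open>\<A>\<^sup>B\<close>, with a family \<open>\<A> i\<close> allowed to depend on the copy \<open>i\<close>.\<close>

definition blocks :: "('i \<Rightarrow> 'a set set) \<Rightarrow> 'i set \<Rightarrow> ('a \<times> 'i) set set" where
  "blocks \<A> B = (\<lambda>g. \<Union>i\<in>B. (\<lambda>x. (x, i)) ` g i) ` Pi\<^sub>E B \<A>"

lemma slice_blocks_member:
  "i \<in> B \<Longrightarrow> slice i (\<Union>k\<in>B. (\<lambda>x. (x, k)) ` g k) = g i"
  by (auto simp: slice_def)

lemma mem_blocks_iff:
  "F \<in> blocks \<A> B \<longleftrightarrow> snd ` F \<subseteq> B \<and> (\<forall>i\<in>B. slice i F \<in> \<A> i)"
proof
  assume "F \<in> blocks \<A> B"
  then obtain g where "g \<in> Pi\<^sub>E B \<A>" "F = (\<Union>i\<in>B. (\<lambda>x. (x, i)) ` g i)"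
    by (auto simp: blocks_def)
  then show "snd ` F \<subseteq> B \<and> (\<forall>i\<in>B. slice i F \<in> \<A> i)"
    by (auto simp: slice_blocks_member)
next
  assume F: "snd ` F \<subseteq> B \<and> (\<forall>i\<in>B. slice i F \<in> \<A> i)"
  then have "F = (\<Union>i\<in>B. (\<lambda>x. (x, i)) ` restrict (\<lambda>i. slice i F) B i)"
    by (force simp: slice_def)
  moreover have "restrict (\<lambda>i. slice i F) B \<in> Pi\<^sub>E B \<A>"
    using F by simp
  ultimately show "F \<in> blocks \<A> B"
    unfolding blocks_def by blast
qed

lemma wreath_eq_UN_blocks: "wreath \<A> \<B> = (\<Union>B\<in>\<B>. blocks (\<lambda>_. \<A>) B)"
proof -
  have block_eq: "{\<Union>i\<in>B. (\<lambda>x. (x, i)) ` g i | g. \<forall>i\<in>B. g i \<in> \<A>} = blocks (\<lambda>_. \<A>) B" for B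
  proof (intro equalityI subsetI)
    fix F assume "F \<in> {\<Union>i\<in>B. (\<lambda>x. (x, i)) ` g i | g. \<forall>i\<in>B. g i \<in> \<A>}"
    then obtain g where "\<forall>i\<in>B. g i \<in> \<A>" "F = (\<Union>i\<in>B. (\<lambda>x. (x, i)) ` g i)"
      by blast
    then show "F \<in> blocks (\<lambda>_. \<A>) B"
      by (auto simp: mem_blocks_iff slice_blocks_member)
  next
    fix F assume "F \<in> blocks (\<lambda>_. \<A>) B"
    then obtain g where "g \<in> Pi\<^sub>E B (\<lambda>_. \<A>)" "F = (\<Union>i\<in>B. (\<lambda>x. (x, i)) ` g i)"
      unfolding blocks_def by blast
    then show "F \<in> {\<Union>i\<in>B. (\<lambda>x. (x, i)) ` g i | g. \<forall>i\<in>B. g i \<in> \<A>}"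
      by (blast dest: PiE_mem)
  qed
  show ?thesis
    unfolding wreath_def by (rule SUP_cong[OF refl block_eq])
qed

lemma card_blocks:
  assumes "finite B" shows "card (blocks \<A> B) = (\<Prod>i\<in>B. card (\<A> i))"
proof -
  have "inj_on (\<lambda>g. \<Union>i\<in>B. (\<lambda>x. (x, i)) ` g i) (Pi\<^sub>E B \<A>)"
  proof (rule inj_onI)
    fix g h assume g: "g \<in> Pi\<^sub>E B \<A>" and h: "h \<in> Pi\<^sub>E B \<A>"
      and eq: "(\<Union>i\<in>B. (\<lambda>x. (x, i)) ` g i) = (\<Union>i\<in>B. (\<lambda>x. (x, i)) ` h i)"
    show "g = h"
    proof (rule PiE_ext[OF g h])
      fix i assume "i \<in> B"
      then show "g i = h i"
        using slice_blocks_member[of i B g] slice_blocks_member[of i B h] eq by simp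
    qed
  qed
  then show ?thesis
    unfolding blocks_def by (simp add: card_image card_PiE assms)
qed

lemma snd_image_blocks:
  assumes "F \<in> blocks \<A> B" "\<forall>i\<in>B. {} \<notin> \<A> i"
  shows "snd ` F = B"
proof
  show "snd ` F \<subseteq> B"
    using assms(1) by (simp add: mem_blocks_iff)
next
  show "B \<subseteq> snd ` F"
  proof
    fix i assume "i \<in> B"
    then have "slice i F \<noteq> {}"
      using assms by (metis mem_blocks_iff)
    then show "i \<in> snd ` F"
      by (force simp: slice_def)
  qed
qed

lemma blocks_avoiding:
  "{F \<in> blocks \<A> B. F \<inter> S = {}} = blocks (\<lambda>i. {A \<in> \<A> i. A \<inter> slice i S = {}}) B"
proof -
  have "F \<inter> S = {} \<longleftrightarrow> (\<forall>i\<in>B. slice i F \<inter> slice i S = {})" if "snd ` F \<subseteq> B" for F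
    using that by (fastforce simp: slice_def)
  then show ?thesis
    unfolding mem_blocks_iff set_eq_iff by auto
qed

lemma card_wreath_avoiding:
  assumes "finite \<A>" "{} \<notin> \<A>" "finite \<B>" "\<forall>B\<in>\<B>. finite B"
  shows "card {F \<in> wreath \<A> \<B>. F \<inter> S = {}}
           = (\<Sum>B\<in>\<B>. \<Prod>i\<in>B. card {A \<in> \<A>. A \<inter> slice i S = {}})"
proof -
  let ?\<A>\<^sub>S = "\<lambda>i. {A \<in> \<A>. A \<inter> slice i S = {}}"
  have "{F \<in> wreath \<A> \<B>. F \<inter> S = {}} = (\<Union>B\<in>\<B>. blocks ?\<A>\<^sub>S B)"
    unfolding wreath_eq_UN_blocks blocks_avoiding[symmetric] by blast
  moreover have "finite (blocks ?\<A>\<^sub>S B)" if "B \<in> \<B>" for B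
    using assms(1,4) that by (simp add: blocks_def finite_PiE)
  moreover have "blocks ?\<A>\<^sub>S B \<inter> blocks ?\<A>\<^sub>S B' = {}" if "B \<noteq> B'" for B B'
    using snd_image_blocks[of _ ?\<A>\<^sub>S B] snd_image_blocks[of _ ?\<A>\<^sub>S B'] assms(2) that by blast
  ultimately show ?thesis
    using assms(3,4) by (simp add: card_UN_disjoint card_blocks)
qed

lemma card_wreath:
  assumes "finite \<A>" "{} \<notin> \<A>" "finite \<B>" "\<forall>B\<in>\<B>. finite B"
  shows "card (wreath \<A> \<B>) = (\<Sum>B\<in>\<B>. card \<A> ^ card B)"
  using card_wreath_avoiding[OF assms, of "{}"] by (simp add: slice_def)

lemma card_eq_sum_card_slice:
  assumes "finite I" "snd ` F \<subseteq> I" "\<forall>i\<in>I. finite (slice i F)"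
  shows "finite F" "card F = (\<Sum>i\<in>I. card (slice i F))"
proof -
  have F: "F = (\<lambda>(i, x). (x, i)) ` (SIGMA i:I. slice i F)"
    using assms(2) by (force simp: slice_def)
  have "inj_on (\<lambda>(i, x). (x, i)) (SIGMA i:I. slice i F)"
    by (auto simp: inj_on_def)
  then show "finite F" "card F = (\<Sum>i\<in>I. card (slice i F))"
    using assms(1,3) by (subst F; simp add: card_image card_SigmaI)+
qed

lemma uniform_wreath:
  assumes "uniform a \<A>" "uniform b \<B>"
  shows "uniform (a * b) (wreath \<A> \<B>)"
  unfolding uniform_def
proof
  fix F assume "F \<in> wreath \<A> \<B>"
  then obtain B where B: "B \<in> \<B>" "snd ` F \<subseteq> B" "\<forall>i\<in>B. slice i F \<in> \<A>"
    by (auto simp: wreath_eq_UN_blocks mem_blocks_iff)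
  have "finite B" "card B = b" "\<forall>i\<in>B. finite (slice i F) \<and> card (slice i F) = a"
    using assms B unfolding uniform_def by auto
  then show "finite F \<and> card F = a * b"
    using card_eq_sum_card_slice[of B F] B(2) by simp
qed

lemma intersecting_wreath:
  assumes "intersecting \<A>" "intersecting \<B>"
  shows "intersecting (wreath \<A> \<B>)"
  unfolding intersecting_def
proof (intro ballI)
  fix F G assume "F \<in> wreath \<A> \<B>" "G \<in> wreath \<A> \<B>"
  then obtain B C where "B \<in> \<B>" "\<forall>i\<in>B. slice i F \<in> \<A>" "C \<in> \<B>" "\<forall>i\<in>C. slice i G \<in> \<A>"
    by (auto simp: wreath_eq_UN_blocks mem_blocks_iff)
  moreover from this obtain i where "i \<in> B" "i \<in> C"
    using assms(2) unfolding intersecting_def by blast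
  ultimately have "slice i F \<inter> slice i G \<noteq> {}"
    using assms(1) unfolding intersecting_def by blast
  then show "F \<inter> G \<noteq> {}"
    by (auto simp: slice_def)
qed

lemma Union_wreath: "\<Union>(wreath \<A> \<B>) = \<Union>\<A> \<times> \<Union>\<B>"
proof (intro equalityI subrelI)
  fix x i assume "(x, i) \<in> \<Union>(wreath \<A> \<B>)"
  then obtain F where "(x, i) \<in> F" "F \<in> wreath \<A> \<B>"
    by blast
  moreover from this(2) obtain B where "B \<in> \<B>" "snd ` F \<subseteq> B" "\<forall>k\<in>B. slice k F \<in> \<A>"
    by (auto simp: wreath_eq_UN_blocks mem_blocks_iff)
  ultimately have "i \<in> B" "x \<in> slice i F" "slice i F \<in> \<A>"
    by (force simp: slice_def)+
  then show "(x, i) \<in> \<Union>\<A> \<times> \<Union>\<B>"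
    using \<open>B \<in> \<B>\<close> by blast
next
  fix x i assume "(x, i) \<in> \<Union>\<A> \<times> \<Union>\<B>"
  then obtain A B where "x \<in> A" "A \<in> \<A>" "i \<in> B" "B \<in> \<B>"
    by blast
  let ?F = "\<Union>k\<in>B. (\<lambda>x. (x, k)) ` A"
  have "?F \<in> {\<Union>k\<in>B. (\<lambda>x. (x, k)) ` g k | g. \<forall>k\<in>B. g k \<in> \<A>}"
    using \<open>A \<in> \<A>\<close> by (intro CollectI exI[of _ "\<lambda>_. A"]) simp
  then have "?F \<in> wreath \<A> \<B>"
    unfolding wreath_def by (rule UN_I[OF \<open>B \<in> \<B>\<close>])
  moreover have "(x, i) \<in> ?F"
    using \<open>x \<in> A\<close> \<open>i \<in> B\<close> by blast
  ultimately show "(x, i) \<in> \<Union>(wreath \<A> \<B>)"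
    by blast
qed

lemma wreath_cover:
  assumes "transversal T \<A>" "transversal I \<B>"
  shows "transversal (T \<times> I) (wreath \<A> \<B>)"
proof
  fix F assume "F \<in> wreath \<A> \<B>"
  then obtain B where "B \<in> \<B>" "\<forall>i\<in>B. slice i F \<in> \<A>"
    by (auto simp: wreath_eq_UN_blocks mem_blocks_iff)
  moreover obtain i where "i \<in> I" "i \<in> B"
    using assms(2) \<open>B \<in> \<B>\<close> by blast
  ultimately obtain x where "x \<in> T" "x \<in> slice i F"
    using assms(1) by blast
  then show "(T \<times> I) \<inter> F \<noteq> {}"
    using \<open>i \<in> I\<close> by (auto simp: slice_def)
qed

lemma tau_eqI:
  assumes "finite T" "transversal T \<F>" "card T = k"
    and "\<And>T'. finite T' \<Longrightarrow> transversal T' \<F> \<Longrightarrow> k \<le> card T'"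
  shows "tau \<F> = k"
  unfolding tau_def using assms by (intro cInf_eq_minimum) auto

lemma gamma_geI:
  assumes "finite Z" "j \<le> card Z"
    and "\<And>S. S \<subseteq> Z \<Longrightarrow> card S = j \<Longrightarrow> n \<le> card {F \<in> \<F>. F \<inter> S = {}}"
  shows "n \<le> gamma j Z \<F>"
proof -
  obtain S where "S \<subseteq> Z" "card S = j"
    using obtain_subset_with_card_n[OF assms(2)] by metis
  then show ?thesis
    unfolding gamma_def using assms(3) by (intro cInf_greatest) auto
qed

text \<open>A cover of size at most \<open>j\<close> extends to a \<open>j\<close>-subset of the ground set, which then
  meets every member.\<close>
lemma card_cover_gt:
  assumes "finite Z" "j \<le> card Z" "\<forall>F\<in>\<F>. F \<subseteq> Z"
    and avoided: "\<And>S. S \<subseteq> Z \<Longrightarrow> card S = j \<Longrightarrow> \<exists>F\<in>\<F>. F \<inter> S = {}"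
    and "finite T" and cover: "transversal T \<F>"
  shows "j < card T"
proof (rule ccontr)
  assume "\<not> j < card T"
  let ?T = "T \<inter> Z"
  have "finite ?T"
    using assms(1) by simp
  have "card ?T \<le> j"
    using \<open>\<not> j < card T\<close> card_mono[OF \<open>finite T\<close>, of ?T] by simp
  have "card (Z - ?T) = card Z - card ?T"
    using \<open>finite ?T\<close> by (simp add: card_Diff_subset)
  then have "j - card ?T \<le> card (Z - ?T)"
    using assms(2) by linarith
  then obtain S0 where S0: "S0 \<subseteq> Z - ?T" "card S0 = j - card ?T" "finite S0"
    by (rule obtain_subset_with_card_n)
  have "card (?T \<union> S0) = j"
    using S0 \<open>finite ?T\<close> \<open>card ?T \<le> j\<close> by (subst card_Un_disjoint) auto
  moreover have "?T \<union> S0 \<subseteq> Z"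
    using S0(1) by blast
  ultimately obtain F where "F \<in> \<F>" "F \<inter> (?T \<union> S0) = {}"
    using avoided by blast
  then show False
    using cover assms(3) by blast
qed

lemma Inf_nat_eq_if_dominated:
  fixes A B :: "nat set"
  assumes "A \<subseteq> B" "\<And>b. b \<in> B \<Longrightarrow> \<exists>a\<in>A. a \<le> b"
  shows "Inf A = Inf B"
proof (cases "B = {}")
  case False
  then obtain a where "a \<in> A" "a \<le> Inf B"
    using assms(2) Inf_nat_def1 by blast
  then have "Inf A \<le> Inf B"
    by (meson bdd_below_bot cInf_lower order_trans)
  moreover have "Inf B \<le> Inf A"
    using assms(1) \<open>a \<in> A\<close> by (intro cInf_superset_mono) auto
  ultimately show ?thesis
    by simp
qed (use assms in simp)

lemma uniform_image:
  assumes "inj f" shows "uniform k (image f ` \<F>) \<longleftrightarrow> uniform k \<F>"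
  using assms unfolding uniform_def
  by (auto simp: card_image finite_image_iff inj_on_subset)

lemma intersecting_image:
  assumes "inj f" shows "intersecting (image f ` \<F>) \<longleftrightarrow> intersecting \<F>"
  using assms unfolding intersecting_def by (auto simp: image_Int[symmetric])

lemma tau_image:
  assumes "inj f" shows "tau (image f ` \<F>) = tau \<F>"
proof -
  let ?sizes = "\<lambda>\<G>. {card T |T. finite T \<and> transversal T \<G>}"
  have "?sizes \<F> \<subseteq> ?sizes (image f ` \<F>)"
  proof
    fix n assume "n \<in> ?sizes \<F>"
    then obtain T where "n = card T" "finite T" "transversal T \<F>"
      by blast
    then have "n = card (f ` T)" "finite (f ` T)" "transversal (f ` T) (image f ` \<F>)"
      using assms by (auto simp: card_image inj_on_subset image_Int[symmetric])
    then show "n \<in> ?sizes (image f ` \<F>)"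
      by blast
  qed
  moreover have "\<exists>n'\<in>?sizes \<F>. n' \<le> n" if n: "n \<in> ?sizes (image f ` \<F>)" for n
  proof -
    obtain T where T: "n = card T" "finite T" "transversal T (image f ` \<F>)"
      using n by blast
    have "card (f -` T) \<le> card T"
      using card_vimage_inj_on_le[OF _ T(2), of f UNIV] assms by simp
    moreover have "finite (f -` T)" "transversal (f -` T) \<F>"
      using T assms by (auto intro: finite_vimageI)
    ultimately show ?thesis
      using T(1) by blast
  qed
  ultimately have "Inf (?sizes \<F>) = Inf (?sizes (image f ` \<F>))"
    by (rule Inf_nat_eq_if_dominated)
  then show ?thesis
    unfolding tau_def by (rule sym)
qed

lemma card_avoiding_image:
  assumes "inj f"
  shows "card {F' \<in> image f ` \<F>. F' \<inter> f ` S = {}} = card {F \<in> \<F>. F \<inter> S = {}}"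
proof -
  have "{F' \<in> image f ` \<F>. F' \<inter> f ` S = {}} = image f ` {F \<in> \<F>. F \<inter> S = {}}"
    using assms by (auto simp: image_Int[symmetric] dest: injD)
  moreover have "inj_on (image f) X" for X
    using assms by (simp add: inj_on_def inj_image_eq_iff)
  ultimately show ?thesis
    by (simp add: card_image)
qed

lemma gamma_image:
  assumes "inj f" shows "gamma j (f ` Z) (image f ` \<F>) = gamma j Z \<F>"
proof -
  have "{card {F' \<in> image f ` \<F>. F' \<inter> S' = {}} |S'. S' \<subseteq> f ` Z \<and> card S' = j}
      = {card {F \<in> \<F>. F \<inter> S = {}} |S. S \<subseteq> Z \<and> card S = j}" (is "?L = ?R")
  proof (intro equalityI subsetI)
    fix n assume "n \<in> ?L"
    then obtain S' where S': "n = card {F' \<in> image f ` \<F>. F' \<inter> S' = {}}" "S' \<subseteq> f ` Z" "card S' = j"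
      by blast
    define S where "S = f -` S'"
    have "S' = f ` S" "S \<subseteq> Z"
      using S'(2) assms by (auto simp: S_def dest: injD)
    moreover have "card S = j"
      using S' card_vimage_inj[OF assms, of S'] by (auto simp: S_def)
    ultimately show "n \<in> ?R"
      using S'(1) card_avoiding_image[OF assms] by auto
  next
    fix n assume "n \<in> ?R"
    then obtain S where S: "n = card {F \<in> \<F>. F \<inter> S = {}}" "S \<subseteq> Z" "card S = j"
      by blast
    then have "n = card {F' \<in> image f ` \<F>. F' \<inter> f ` S = {}}" "card (f ` S) = j"
      using assms by (simp_all add: card_avoiding_image card_image inj_on_subset)
    then show "n \<in> ?L"
      using S(2) by blast
  qed
  then show ?thesis
    unfolding gamma_def by simp
qed

lemma gamma_le_m:
  fixes f :: "'a \<Rightarrow> nat" and \<F> :: "'a set set"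
  assumes "inj f" "uniform k \<F>" "intersecting \<F>" "tau \<F> = k"
  shows "enat (gamma j (\<Union>\<F>) \<F>) \<le> m j k"
proof -
  let ?\<F>' = "image f ` \<F>"
  have "uniform k ?\<F>'" "intersecting ?\<F>'" "tau ?\<F>' = k"
    using assms by (simp_all add: uniform_image intersecting_image tau_image)
  then have "enat (gamma j (\<Union>?\<F>') ?\<F>') \<le> m j k"
    unfolding m_def by (intro Sup_upper) blast
  moreover have "gamma j (\<Union>?\<F>') ?\<F>' = gamma j (\<Union>\<F>) \<F>"
    using gamma_image[OF assms(1), of j "\<Union>\<F>" \<F>] by (simp add: image_Union)
  ultimately show ?thesis
    by simp
qed

lemma Collect_mem_simps:
  "{x \<in> {}. P x} = {}"
  "{x \<in> insert a A. P x} = (if P a then insert a {x \<in> A. P x} else {x \<in> A. P x})"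
  by auto

lemma finite_T0: "finite T0"
  by (simp add: T0_def)

lemma card_T0: "card T0 = 10"
  unfolding T0_def by (simp add: set_eq_subset)

lemma empty_notin_T0: "{} \<notin> T0"
  by (simp add: T0_def)

lemma uniform_T0: "uniform 3 T0"
  by (simp add: T0_def uniform_def)

lemma intersecting_T0: "intersecting T0"
  by (simp add: T0_def intersecting_def)

lemma Union_T0: "\<Union>T0 = {1..6}"
proof -
  have "{1..6 :: nat} = {1, 2, 3, 4, 5, 6}"
    by auto
  then show ?thesis
    unfolding T0_def by auto
qed

lemma transversal_T0: "transversal {1, 2, 3} T0"
  by (simp add: T0_def)

lemma card_T0_avoiding_point:
  assumes "x \<in> {1..6}" shows "card {A \<in> T0. A \<inter> {x} = {}} = 5"
proof -
  have "\<forall>x\<in>{1, 2, 3, 4, 5, 6 :: nat}. card {A \<in> T0. A \<inter> {x} = {}} = 5"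
    unfolding T0_def by (simp only: ball_simps Collect_mem_simps) (simp, simp add: set_eq_subset)
  moreover have "x \<in> {1, 2, 3, 4, 5, 6}"
    using assms by auto
  ultimately show ?thesis
    by blast
qed

lemma card_T0_avoiding_pair:
  assumes "x \<in> {1..6}" "y \<in> {1..6}" "x \<noteq> y" shows "card {A \<in> T0. A \<inter> {x, y} = {}} = 2"
proof -
  have "\<forall>x\<in>{1, 2, 3, 4, 5, 6 :: nat}. \<forall>y\<in>{1, 2, 3, 4, 5, 6}. x \<noteq> y \<longrightarrow>
      card {A \<in> T0. A \<inter> {x, y} = {}} = 2"
    unfolding T0_def by (simp only: ball_simps Collect_mem_simps) (simp, simp add: set_eq_subset)
  moreover have "x \<in> {1, 2, 3, 4, 5, 6}" "y \<in> {1, 2, 3, 4, 5, 6}"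
    using assms by auto
  ultimately show ?thesis
    using assms(3) by blast
qed

text \<open>The least number of members of \<open>T0\<close> missing an \<open>s\<close>-subset of \<open>[6]\<close>; it is \<open>0\<close> from
  \<open>s = 3\<close> on, since every member of the intersecting family \<open>T0\<close> is a transversal.\<close>
definition T0_avoiding_lb :: "nat \<Rightarrow> nat" where
  "T0_avoiding_lb s = (if s = 0 then 10 else if s = 1 then 5 else if s = 2 then 2 else 0)"

lemma T0_avoiding_lb_le:
  assumes "X \<subseteq> {1..6}" shows "T0_avoiding_lb (card X) \<le> card {A \<in> T0. A \<inter> X = {}}"
proof -
  have "finite X"
    using assms finite_subset by blast
  consider "card X = 0" | "card X = 1" | "card X = 2" | "card X > 2"
    by linarith
  then show ?thesis
  proof cases
    case 1
    then show ?thesis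
      using \<open>finite X\<close> card_T0 by (simp add: T0_avoiding_lb_def)
  next
    case 2
    then obtain x where "X = {x}"
      by (auto simp: card_1_singleton_iff)
    then show ?thesis
      using 2 assms card_T0_avoiding_point[of x] by (simp add: T0_avoiding_lb_def)
  next
    case 3
    then obtain x y where "X = {x, y}" "x \<noteq> y"
      by (auto simp: card_2_iff)
    then show ?thesis
      using 3 assms card_T0_avoiding_pair[of x y] by (simp add: T0_avoiding_lb_def)
  qed (simp add: T0_avoiding_lb_def)
qed

lemma T0_avoiding_lb_pair_sum:
  assumes "s1 + s2 + s3 = (5::nat)"
  shows "20 \<le> T0_avoiding_lb s1 * T0_avoiding_lb s2 + T0_avoiding_lb s1 * T0_avoiding_lb s3
              + T0_avoiding_lb s2 * T0_avoiding_lb s3"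
proof -
  have "s1 \<in> {0, 1, 2, 3, 4, 5}" "s2 \<in> {0, 1, 2, 3, 4, 5}" "s1 + s2 \<le> 5" "s3 = 5 - s1 - s2"
    using assms by auto
  then show ?thesis
    unfolding T0_avoiding_lb_def by (elim insertE emptyE) simp_all
qed

lemma ksubsets_3_2: "ksubsets {1, 2, 3 :: nat} 2 = {{1, 2}, {1, 3}, {2, 3}}"
proof (intro equalityI subsetI)
  fix B assume "B \<in> ksubsets {1, 2, 3 :: nat} 2"
  then obtain a b where "B = {a, b}" "a \<noteq> b" "a \<in> {1, 2, 3}" "b \<in> {1, 2, 3}"
    by (auto simp: ksubsets_def card_2_iff)
  then show "B \<in> {{1, 2}, {1, 3}, {2, 3}}"
    by (elim insertE emptyE) (simp_all add: insert_commute)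
qed (auto simp: ksubsets_def)

lemma finite_pairs_3:
  "finite {{1, 2}, {1, 3}, {2, 3 :: nat}}" "\<forall>B\<in>{{1, 2}, {1, 3}, {2, 3 :: nat}}. finite B"
  by auto

lemma uniform_pairs_3: "uniform 2 {{1, 2}, {1, 3}, {2, 3 :: nat}}"
  by (auto simp: uniform_def)

lemma intersecting_pairs_3: "intersecting {{1, 2}, {1, 3}, {2, 3 :: nat}}"
  by (auto simp: intersecting_def)

lemma Union_pairs_3: "\<Union>{{1, 2}, {1, 3}, {2, 3 :: nat}} = {1, 2, 3}"
  by auto

lemma transversal_pairs_3: "transversal {1, 2} {{1, 2}, {1, 3}, {2, 3 :: nat}}"
  by auto

lemma sum_pairs_3: "(\<Sum>B\<in>{{1, 2}, {1, 3}, {2, 3 :: nat}}. g B) = g {1, 2} + g {1, 3} + g {2, 3}"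
  by (simp add: doubleton_eq_iff add.assoc)

lemma card_T0_wreath: "card (wreath T0 (ksubsets {1, 2, 3} 2)) = 300"
  unfolding ksubsets_3_2 card_wreath[OF finite_T0 empty_notin_T0 finite_pairs_3] sum_pairs_3
  by (simp add: card_T0)

lemma uniform_T0_wreath: "uniform 6 (wreath T0 (ksubsets {1, 2, 3} 2))"
  unfolding ksubsets_3_2 using uniform_wreath[OF uniform_T0 uniform_pairs_3] by simp

lemma intersecting_T0_wreath: "intersecting (wreath T0 (ksubsets {1, 2, 3} 2))"
  unfolding ksubsets_3_2 by (rule intersecting_wreath[OF intersecting_T0 intersecting_pairs_3])

lemma Union_T0_wreath: "\<Union>(wreath T0 (ksubsets {1, 2, 3} 2)) = {1..6} \<times> {1, 2, 3}"
  unfolding ksubsets_3_2 Union_wreath Union_T0 Union_pairs_3 ..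

lemma card_T0_wreath_avoiding_ge:
  assumes "S \<subseteq> {1..6} \<times> {1, 2, 3}" "card S = 5"
  shows "20 \<le> card {F \<in> wreath T0 (ksubsets {1, 2, 3} 2). F \<inter> S = {}}"
proof -
  define a where "a i = card {A \<in> T0. A \<inter> slice i S = {}}" for i
  let ?lb = "\<lambda>i. T0_avoiding_lb (card (slice i S))"
  have slices: "slice i S \<subseteq> {1..6}" for i
    using assms(1) by (auto simp: slice_def)
  have "card S = card (slice 1 S) + card (slice 2 S) + card (slice 3 S)"
  proof -
    have "snd ` S \<subseteq> {1, 2, 3}" "\<forall>i\<in>{1, 2, 3}. finite (slice i S)"
      using assms(1) slices by (auto intro: finite_subset)
    then show ?thesis
      using card_eq_sum_card_slice(2)[of "{1, 2, 3}" S] by simp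
  qed
  then have "20 \<le> ?lb 1 * ?lb 2 + ?lb 1 * ?lb 3 + ?lb 2 * ?lb 3"
    using assms(2) by (intro T0_avoiding_lb_pair_sum) simp
  also have "\<dots> \<le> a 1 * a 2 + a 1 * a 3 + a 2 * a 3"
    using T0_avoiding_lb_le[OF slices] unfolding a_def by (intro add_mono mult_le_mono)
  also have "\<dots> = (\<Sum>B\<in>{{1, 2}, {1, 3}, {2, 3}}. \<Prod>i\<in>B. a i)"
    unfolding sum_pairs_3 by simp
  also have "\<dots> = card {F \<in> wreath T0 (ksubsets {1, 2, 3} 2). F \<inter> S = {}}"
    unfolding ksubsets_3_2 a_def using card_wreath_avoiding[OF finite_T0 empty_notin_T0 finite_pairs_3]
    by simp
  finally show ?thesis .
qed

lemma gamma_T0_wreath: "20 \<le> gamma 5 ({1..6} \<times> {1, 2, 3}) (wreath T0 (ksubsets {1, 2, 3} 2))"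
  by (rule gamma_geI[OF _ _ card_T0_wreath_avoiding_ge]) (simp_all add: card_cartesian_product)

lemma tau_T0_wreath: "tau (wreath T0 (ksubsets {1, 2, 3} 2)) = 6"
proof (rule tau_eqI)
  show "transversal ({1, 2, 3} \<times> {1, 2}) (wreath T0 (ksubsets {1, 2, 3} 2))"
    unfolding ksubsets_3_2 by (rule wreath_cover[OF transversal_T0 transversal_pairs_3])
next
  fix T assume "finite T" and cover: "transversal T (wreath T0 (ksubsets {1, 2, 3} 2))"
  have avoided: "\<exists>F\<in>wreath T0 (ksubsets {1, 2, 3} 2). F \<inter> S = {}"
    if "S \<subseteq> {1..6} \<times> {1, 2, 3}" "card S = 5" for S
  proof -
    have "card {F \<in> wreath T0 (ksubsets {1, 2, 3} 2). F \<inter> S = {}} \<noteq> 0"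
      using card_T0_wreath_avoiding_ge[OF that] by linarith
    then have "{F \<in> wreath T0 (ksubsets {1, 2, 3} 2). F \<inter> S = {}} \<noteq> {}"
      by (metis card.empty)
    then show ?thesis
      by blast
  qed
  have "\<forall>F\<in>wreath T0 (ksubsets {1, 2, 3} 2). F \<subseteq> {1..6} \<times> {1, 2, 3}"
    using Union_T0_wreath by blast
  moreover have "finite ({1..6 :: nat} \<times> {1, 2, 3 :: nat})" "5 \<le> card ({1..6 :: nat} \<times> {1, 2, 3 :: nat})"
    by (simp_all add: card_cartesian_product)
  ultimately have "5 < card T"
    using card_cover_gt[where Z = "{1..6} \<times> {1, 2, 3}" and j = 5] avoided \<open>finite T\<close> cover by blast
  then show "6 \<le> card T"
    by simp
qed simp_all

theorem proposition5p8:
  shows "m 5 6 \<ge> 20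
    \<and> card (wreath T0 (ksubsets {1,2,3} 2)) = 300
    \<and> uniform 6 (wreath T0 (ksubsets {1,2,3} 2))
    \<and> intersecting (wreath T0 (ksubsets {1,2,3} 2))
    \<and> tau (wreath T0 (ksubsets {1,2,3} 2)) = 6
    \<and> gamma 5 ({1..6} \<times> {1,2,3}) (wreath T0 (ksubsets {1,2,3} 2)) \<ge> 20"
proof -
  have "enat (gamma 5 ({1..6} \<times> {1, 2, 3}) (wreath T0 (ksubsets {1, 2, 3} 2))) \<le> m 5 6"
    using gamma_le_m[OF inj_prod_encode uniform_T0_wreath intersecting_T0_wreath tau_T0_wreath]
    unfolding Union_T0_wreath .
  moreover have "20 \<le> enat (gamma 5 ({1..6} \<times> {1, 2, 3}) (wreath T0 (ksubsets {1, 2, 3} 2)))"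
    using gamma_T0_wreath by (simp only: numeral_eq_enat enat_ord_simps(1))
  ultimately have "20 \<le> m 5 6"
    by (rule order_trans[rotated])
  then show ?thesis
    using card_T0_wreath uniform_T0_wreath intersecting_T0_wreath tau_T0_wreath gamma_T0_wreath
    by blast
qed

end
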